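(* Tight GFG-NSWs and tight GFG-NRWs are weak-type: every tight GFG-NSW and every tight GFG-NRW $\mathcal{A}=\langle\Sigma,Q,Q_0,\delta,\alpha\rangle$ whose language is recognized by some GFG-NWW has an equivalent GFG-NWW on the same structure, i.e. there is $\alpha'\subseteq Q$ such that $\langle\Sigma,Q,Q_0,\delta,\alpha'\rangle$ is a weak automaton, is GFG, and recognizes $L(\mathcal{A})$.
   Context: An automaton $\langle\Sigma,Q,Q_0,\delta,\alpha\rangle$ has $\delta:Q\times\Sigma\to2^Q$; runs are accepting if the set $S$ of infinitely visited states satisfies $\alpha$. Rabin ($\alpha$ a set of pairs $\langle E,F\rangle$): some pair has $S\cap E=\emptyset$, $S\cap F\ne\emptyset$; Streett: every pair has $S\cap E=\emptyset$ or $S\cap F\ne\emptyset$; Büchi ($\alpha\subseteq Q$): $S\cap\alpha\ne\emptyset$. A Büchi automaton is weak if each strongly connected component $C$ satisfies $C\subseteq\alpha$ or $C\cap\alpha=\emptyset$. NSW/NRW/NWW: nondeterministic Streett/Rabin/weak word automaton. $\mathcal{A}$ is GFG if there is a strategy $g:\Sigma^*\to Q$ such that for every $w=a_1a_2\cdots$, $g(\epsilon),g(a_1),g(a_1a_2),\ldots$ is a run on $w$, accepting whenever $w\in L(\mathcal{A})$. Finite-state strategies are transducers $g=\langle\Sigma,Q,M,m_0,\rho,\tau\rangle$ (finite memories $M$, $\rho:M\times\Sigma\to M$ extended to words from $m_0$, $\tau:M\to Q$, $g(u)=\tau(\rho(u))$); $m$ is a memory of $q$ if $\tau(m)=q$.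 $\mathcal{A}_g=\langle\Sigma,M,m_0,\rho,\alpha_g\rangle$ where $\alpha_g$ replaces each set $F$ in $\alpha$ by $\{m\mid\tau(m)\in F\}$. A transition $\langle q,a,q'\rangle$ is used by $g$ if $q=g(u)$, $q'=g(ua)$ for some $u$. A combination of paths from a set $P$ of finite paths is the union of the element sets of a nonempty subset of $P$. For memories $m\neq m'$ with $\tau(m)=\tau(m')$, $m$ is replaceable by $m'$ if the set of paths of $\mathcal{A}_g$ from $m'$ to $m$ is empty or all its combinations are accepting. $\mathcal{A}$ is tight if for some finite-state strategy $g$ witnessing its GFGness, every transition is used by $g$ and no memory is replaceable by a different memory of the same state. *)

theory Defs
  imports Main
begin

datatype 'q cond =
    Rabin "('q set \<times> 'q set) set"
  | Streett "('q set \<times> 'q set) set"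
  | Buchi "'q set"

fun accepts :: "'q cond \<Rightarrow> 'q set \<Rightarrow> bool" where
  "accepts (Rabin P) S = (\<exists>(E, F) \<in> P. S \<inter> E = {} \<and> S \<inter> F \<noteq> {})"
| "accepts (Streett P) S = (\<forall>(E, F) \<in> P. S \<inter> E = {} \<or> S \<inter> F \<noteq> {})"
| "accepts (Buchi F) S = (S \<inter> F \<noteq> {})"

definition pre :: "'m set \<Rightarrow> ('m \<Rightarrow> 'q) \<Rightarrow> 'q set \<Rightarrow> 'm set" where
  "pre M tau F = {m \<in> M. tau m \<in> F}"

fun map_cond :: "'m set \<Rightarrow> ('m \<Rightarrow> 'q) \<Rightarrow> 'q cond \<Rightarrow> 'm cond" where
  "map_cond M tau (Rabin P) = Rabin ((\<lambda>(E, F). (pre M tau E, pre M tau F)) ` P)"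
| "map_cond M tau (Streett P) = Streett ((\<lambda>(E, F). (pre M tau E, pre M tau F)) ` P)"
| "map_cond M tau (Buchi F) = Buchi (pre M tau F)"

record ('a, 'q) aut =
  alph :: "'a set"
  states :: "'q set"
  init :: "'q set"
  trans :: "'q \<Rightarrow> 'a \<Rightarrow> 'q set"
  acc :: "'q cond"

definition automaton :: "('a, 'q) aut \<Rightarrow> bool" where
  "automaton A \<longleftrightarrow> finite (alph A) \<and> finite (states A) \<and> init A \<subseteq> states A \<and>
     (\<forall>q \<in> states A. \<forall>a \<in> alph A. trans A q a \<subseteq> states A)"

definition word :: "('a, 'q) aut \<Rightarrow> (nat \<Rightarrow> 'a) \<Rightarrow> bool" where
  "word A w \<longleftrightarrow> (\<forall>i. w i \<in> alph A)"

definition run :: "('a, 'q) aut \<Rightarrow> (nat \<Rightarrow> 'a) \<Rightarrow> (nat \<Rightarrow> 'q) \<Rightarrow> bool" where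
  "run A w r \<longleftrightarrow> r 0 \<in> init A \<and> (\<forall>i. r (Suc i) \<in> trans A (r i) (w i))"

definition inf_set :: "(nat \<Rightarrow> 'q) \<Rightarrow> 'q set" where
  "inf_set r = {q. \<exists>\<^sub>\<infinity>i. r i = q}"

definition accepting_run :: "('a, 'q) aut \<Rightarrow> (nat \<Rightarrow> 'a) \<Rightarrow> (nat \<Rightarrow> 'q) \<Rightarrow> bool" where
  "accepting_run A w r \<longleftrightarrow> run A w r \<and> accepts (acc A) (inf_set r)"

definition lang :: "('a, 'q) aut \<Rightarrow> (nat \<Rightarrow> 'a) set" where
  "lang A = {w. word A w \<and> (\<exists>r. accepting_run A w r)}"

definition edges :: "('a, 'q) aut \<Rightarrow> ('q \<times> 'q) set" where
  "edges A = {(q, q'). q \<in> states A \<and> (\<exists>a \<in> alph A. q' \<in> trans A q a)}"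

definition scc :: "('a, 'q) aut \<Rightarrow> 'q \<Rightarrow> 'q set" where
  "scc A q = {q' \<in> states A. (q, q') \<in> (edges A)\<^sup>* \<and> (q', q) \<in> (edges A)\<^sup>*}"

definition weak :: "('a, 'q) aut \<Rightarrow> bool" where
  "weak A \<longleftrightarrow> (\<exists>\<alpha>. acc A = Buchi \<alpha> \<and> \<alpha> \<subseteq> states A \<and>
     (\<forall>q \<in> states A. scc A q \<subseteq> \<alpha> \<or> scc A q \<inter> \<alpha> = {}))"

definition pref :: "nat \<Rightarrow> (nat \<Rightarrow> 'a) \<Rightarrow> 'a list" where
  "pref i w = map w [0..<i]"

definition gfg_strategy :: "('a, 'q) aut \<Rightarrow> ('a list \<Rightarrow> 'q) \<Rightarrow> bool" where
  "gfg_strategy A g \<longleftrightarrow> (\<forall>w. word A w \<longrightarrow>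
      run A w (\<lambda>i. g (pref i w)) \<and>
      (w \<in> lang A \<longrightarrow> accepts (acc A) (inf_set (\<lambda>i. g (pref i w)))))"

definition GFG :: "('a, 'q) aut \<Rightarrow> bool" where
  "GFG A \<longleftrightarrow> (\<exists>g. gfg_strategy A g)"

section \<open>Finite-state strategies (memories are natural numbers, w.l.o.g.)\<close>

record ('a, 'q) transducer =
  mem :: "nat set"
  m0 :: nat
  rho :: "nat \<Rightarrow> 'a \<Rightarrow> nat"
  tau :: "nat \<Rightarrow> 'q"

definition transducer_wf :: "('a, 'q) aut \<Rightarrow> ('a, 'q) transducer \<Rightarrow> bool" where
  "transducer_wf A T \<longleftrightarrow> finite (mem T) \<and> m0 T \<in> mem T \<and>
     (\<forall>m \<in> mem T. \<forall>a \<in> alph A. rho T m a \<in> mem T) \<and>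
     (\<forall>m \<in> mem T. tau T m \<in> states A)"

definition rho_star :: "('a, 'q) transducer \<Rightarrow> 'a list \<Rightarrow> nat" where
  "rho_star T u = fold (\<lambda>a m. rho T m a) u (m0 T)"

definition strat :: "('a, 'q) transducer \<Rightarrow> 'a list \<Rightarrow> 'q" where
  "strat T u = tau T (rho_star T u)"

definition mem_aut :: "('a, 'q) aut \<Rightarrow> ('a, 'q) transducer \<Rightarrow> ('a, nat) aut" where
  "mem_aut A T = \<lparr> alph = alph A, states = mem T, init = {m0 T},
      trans = (\<lambda>m a. {rho T m a}), acc = map_cond (mem T) (tau T) (acc A) \<rparr>"

definition used :: "('a, 'q) aut \<Rightarrow> ('a, 'q) transducer \<Rightarrow> 'q \<Rightarrow> 'a \<Rightarrow> 'q \<Rightarrow> bool" where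
  "used A T q a q' \<longleftrightarrow> (\<exists>u \<in> lists (alph A). q = strat T u \<and> q' = strat T (u @ [a]))"

definition paths :: "('a, 'q) aut \<Rightarrow> 'q \<Rightarrow> 'q \<Rightarrow> 'q list set" where
  "paths A p p' = {ps. ps \<noteq> [] \<and> hd ps = p \<and> last ps = p' \<and> set ps \<subseteq> states A \<and>
      (\<forall>i. Suc i < length ps \<longrightarrow> (\<exists>a \<in> alph A. ps ! Suc i \<in> trans A (ps ! i) a))}"

definition replaceable :: "('a, 'q) aut \<Rightarrow> ('a, 'q) transducer \<Rightarrow> nat \<Rightarrow> nat \<Rightarrow> bool" where
  "replaceable A T m m' \<longleftrightarrow> m \<in> mem T \<and> m' \<in> mem T \<and> m \<noteq> m' \<and> tau T m = tau T m' \<and>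
     (let P = paths (mem_aut A T) m' m in
       P = {} \<or> (\<forall>X \<subseteq> P. X \<noteq> {} \<longrightarrow> accepts (acc (mem_aut A T)) (\<Union>ps \<in> X. set ps)))"

definition tight :: "('a, 'q) aut \<Rightarrow> bool" where
  "tight A \<longleftrightarrow> (\<exists>T. transducer_wf A T \<and> gfg_strategy A (strat T) \<and>
     (\<forall>q \<in> states A. \<forall>a \<in> alph A. \<forall>q' \<in> trans A q a. used A T q a q') \<and>
     (\<forall>m m'. \<not> replaceable A T m m'))"

end

(* A strategy g witnessing tightness uses every transition, so a state q = g u accepts exactly
   the residual of L(A) after u, and this correspondence is preserved along every transition.
   Let alpha' be the union of the SCCs that carry an accepting infinite path. An accepting run
   ends inside such an SCC, so L(A) is contained in the Buchi language of alpha' and g remains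
   a GFG strategy for it. Conversely, let a rejecting run end in an SCC C carrying an accepting
   path. Then C carries both an accepting and a rejecting path, and as C is strongly connected,
   the finite words leading to states of C form a set from which membership in L(A) can be
   switched on and off forever. Playing these alternations against a GFG strategy of the weak
   automaton B yields a run of B visiting accepting and rejecting states infinitely often, hence
   inside one SCC of B, which weakness forbids. *)

theory Submission
  imports Defs "HOL-Library.Omega_Words_Fun"
begin

section \<open>Runs and strongly connected components\<close>

lemma pref_eq_prefix: "pref i w = prefix i w"
  by (simp add: pref_def subsequence_def)

lemma inf_set_eq_limit: "inf_set = limit"
  by (simp add: fun_eq_iff inf_set_def limit_def)

lemma word_conc: "u \<in> lists (alph A) \<Longrightarrow> word A x \<Longrightarrow> word A (u \<frown> x)"
  by (auto simp: word_def conc_def)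

lemma word_suffix: "word A w \<Longrightarrow> word A (suffix n w)"
  by (simp add: word_def)

lemma acc_update_simps [simp]:
  "scc (A\<lparr>acc := c\<rparr>) = scc A"
  "word (A\<lparr>acc := c\<rparr>) = word A"
  "run (A\<lparr>acc := c\<rparr>) = run A"
  by (simp_all add: edges_def scc_def word_def run_def fun_eq_iff)

lemma scc_subset_states: "scc A q \<subseteq> states A"
  by (auto simp: scc_def)

lemma scc_eq: "q' \<in> scc A q \<Longrightarrow> scc A q' = scc A q"
  unfolding scc_def by (auto intro: rtrancl_trans)

lemma run_states:
  assumes "automaton A" "word A w" "run A w r"
  shows "r i \<in> states A"
proof (induction i)
  case 0
  then show ?case using assms by (auto simp: automaton_def run_def)
next
  case (Suc i)
  then show ?case using assms unfolding automaton_def run_def word_def by blast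
qed

lemma run_finite_range: "automaton A \<Longrightarrow> word A w \<Longrightarrow> run A w r \<Longrightarrow> finite (range r)"
  using run_states by (metis automaton_def finite_subset image_subset_iff)

lemma run_reach:
  assumes "automaton A" "word A w" "run A w r" "i \<le> j"
  shows "(r i, r j) \<in> (edges A)\<^sup>*"
  using \<open>i \<le> j\<close>
proof (induction j rule: dec_induct)
  case (step j)
  have "(r j, r (Suc j)) \<in> edges A"
    using assms run_states[OF assms(1-3)] by (auto simp: edges_def run_def word_def)
  with step.IH show ?case by simp
qed simp

lemma limit_run_subset_scc:
  assumes "automaton A" "word A w" "run A w r" "q \<in> limit r"
  shows "limit r \<subseteq> scc A q"
proof
  fix q' assume "q' \<in> limit r"
  have reach: "(p, p') \<in> (edges A)\<^sup>*" if "p \<in> limit r" "p' \<in> limit r" for p p'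
  proof -
    obtain i where "r i = p" using \<open>p \<in> limit r\<close> by (auto simp: limit_def dest: INFM_EX)
    moreover obtain j where "i \<le> j" "r j = p'"
      using \<open>p' \<in> limit r\<close> by (auto simp: limit_def INFM_nat_le)
    ultimately show ?thesis using run_reach[OF assms(1-3)] by blast
  qed
  have "q' \<in> range r" using \<open>q' \<in> limit r\<close> by (rule subsetD[OF limit_in_range])
  then have "q' \<in> states A" using run_states[OF assms(1-3)] by auto
  then show "q' \<in> scc A q" using reach \<open>q' \<in> limit r\<close> assms(4) by (simp add: scc_def)
qed

lemma weak_run_limit:
  assumes "automaton A" "weak A" "acc A = Buchi \<alpha>" "word A w" "run A w r"
  shows "limit r \<subseteq> \<alpha> \<or> limit r \<inter> \<alpha> = {}"
proof (cases "limit r = {}")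
  case False
  then obtain q where q: "q \<in> limit r" by blast
  have "q \<in> states A"
    using scc_subset_states limit_run_subset_scc[OF assms(1,4,5) q] q by (meson subsetD)
  then have "scc A q \<subseteq> \<alpha> \<or> scc A q \<inter> \<alpha> = {}"
    using assms(2,3) by (auto simp: weak_def)
  then show ?thesis using limit_run_subset_scc[OF assms(1,4,5) q] by blast
qed simp

section \<open>Languages of states and residuals\<close>

definition run_from :: "('a, 'q) aut \<Rightarrow> 'q \<Rightarrow> (nat \<Rightarrow> 'a) \<Rightarrow> (nat \<Rightarrow> 'q) \<Rightarrow> bool" where
  "run_from A q x r \<longleftrightarrow> r 0 = q \<and> (\<forall>i. r (Suc i) \<in> trans A (r i) (x i))"

definition state_lang :: "('a, 'q) aut \<Rightarrow> 'q \<Rightarrow> (nat \<Rightarrow> 'a) set" where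
  "state_lang A q = {x. \<exists>r. run_from A q x r \<and> accepts (acc A) (limit r)}"

lemma run_iff_run_from: "run A w r \<longleftrightarrow> r 0 \<in> init A \<and> run_from A (r 0) w r"
  by (simp add: run_def run_from_def)

lemma run_from_build: "run_from A q (a ## x) (q ## r) \<longleftrightarrow> r 0 \<in> trans A q a \<and> run_from A (r 0) x r"
proof
  assume "run_from A q (a ## x) (q ## r)"
  then have step: "(q ## r) (Suc i) \<in> trans A ((q ## r) i) ((a ## x) i)" for i
    by (simp only: run_from_def)
  show "r 0 \<in> trans A q a \<and> run_from A (r 0) x r"
    using step[of 0] step[of "Suc _"] by (simp add: run_from_def)
next
  assume r: "r 0 \<in> trans A q a \<and> run_from A (r 0) x r"
  show "run_from A q (a ## x) (q ## r)"
    unfolding run_from_def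
  proof (intro conjI allI)
    show "(q ## r) (Suc i) \<in> trans A ((q ## r) i) ((a ## x) i)" for i
      using r by (cases i) (simp_all add: run_from_def)
  qed simp
qed

lemma run_from_suffix: "run_from A q w r \<Longrightarrow> run_from A (r n) (suffix n w) (suffix n r)"
  by (simp add: run_from_def)

lemma run_from_splice:
  assumes "run_from A q w r" "run_from A (r n) x r'"
  shows "run_from A q (prefix n w \<frown> x) (prefix n r \<frown> r')"
  unfolding run_from_def
proof (intro conjI allI)
  show "(prefix n r \<frown> r') 0 = q" using assms by (auto simp: run_from_def conc_def)
  fix i
  show "(prefix n r \<frown> r') (Suc i) \<in> trans A ((prefix n r \<frown> r') i) ((prefix n w \<frown> x) i)"
  proof (cases "Suc i < n")
    case True
    then show ?thesis using assms(1) by (simp add: run_from_def)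
  next
    case False
    have "r' (Suc i - n) \<in> trans A (r' (i - n)) (x (i - n))" if "n \<le> i"
      using assms(2) that by (simp add: run_from_def Suc_diff_le)
    moreover have "r' 0 \<in> trans A (r i) (w i)" if "Suc i = n"
      using assms that unfolding run_from_def by metis
    ultimately show ?thesis using False by (cases "Suc i = n") auto
  qed
qed

lemma suffix_in_state_lang:
  "run A w r \<Longrightarrow> accepts (acc A) (limit r) \<Longrightarrow> suffix n w \<in> state_lang A (r n)"
  unfolding state_lang_def run_iff_run_from using run_from_suffix[of A "r 0" w r n] by auto

lemma lang_if_suffix_in_state_lang:
  assumes "word A w" "run A w r" "suffix n w \<in> state_lang A (r n)"
  shows "w \<in> lang A"
proof -
  obtain r' where r': "run_from A (r n) (suffix n w) r'" "accepts (acc A) (limit r')"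
    using assms(3) by (auto simp: state_lang_def)
  let ?r = "prefix n r \<frown> r'"
  have "run_from A (r 0) w ?r"
    using run_from_splice[of A "r 0" w r n "suffix n w" r'] r'(1) assms(2) by (simp add: run_iff_run_from)
  moreover have "r 0 \<in> init A" using assms(2) by (simp add: run_def)
  ultimately have "run A w ?r" by (simp add: run_iff_run_from run_from_def)
  then show ?thesis
    using assms(1) r'(2) by (auto simp: lang_def accepting_run_def inf_set_eq_limit)
qed

lemma gfg_conc_in_lang_iff:
  assumes "gfg_strategy A g" "u \<in> lists (alph A)" "word A x"
  shows "u \<frown> x \<in> lang A \<longleftrightarrow> x \<in> state_lang A (g u)"
proof -
  let ?w = "u \<frown> x" and ?r = "\<lambda>i. g (prefix i (u \<frown> x))"
  have w: "word A ?w" using word_conc assms(2,3) .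
  then have run: "run A ?w ?r" using assms(1) by (simp add: gfg_strategy_def pref_eq_prefix)
  have "?r (length u) = g u" and "suffix (length u) ?w = x" by simp_all
  moreover have "accepts (acc A) (limit ?r)" if "?w \<in> lang A"
    using assms(1) w that by (simp add: gfg_strategy_def pref_eq_prefix inf_set_eq_limit)
  ultimately show ?thesis
    using suffix_in_state_lang[OF run] lang_if_suffix_in_state_lang[OF w run] by metis
qed

definition uses_all_transitions :: "('a, 'q) aut \<Rightarrow> ('a list \<Rightarrow> 'q) \<Rightarrow> bool" where
  "uses_all_transitions A g \<longleftrightarrow> (\<forall>q \<in> states A. \<forall>a \<in> alph A. \<forall>q' \<in> trans A q a.
     \<exists>u \<in> lists (alph A). q = g u \<and> q' = g (u @ [a]))"

lemma tight_strategy: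
  assumes "tight A"
  obtains T where "gfg_strategy A (strat T)" "uses_all_transitions A (strat T)"
  using assms unfolding tight_def uses_all_transitions_def used_def by blast

lemma state_lang_step:
  assumes "gfg_strategy A g" "uses_all_transitions A g"
    and "q \<in> states A" "a \<in> alph A" "q' \<in> trans A q a" "word A x"
  shows "[a] \<frown> x \<in> state_lang A q \<longleftrightarrow> x \<in> state_lang A q'"
proof -
  obtain u where u: "u \<in> lists (alph A)" "q = g u" "q' = g (u @ [a])"
    using assms(2-5) unfolding uses_all_transitions_def by blast
  have "[a] \<frown> x \<in> state_lang A q \<longleftrightarrow> u \<frown> [a] \<frown> x \<in> lang A"
    using gfg_conc_in_lang_iff[OF assms(1) u(1)] word_conc[of "[a]" A x] assms(4,6) u(2) by simp
  also have "\<dots> \<longleftrightarrow> x \<in> state_lang A q'"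
    using gfg_conc_in_lang_iff[OF assms(1) _ assms(6), of "u @ [a]"] u assms(4) by simp
  finally show ?thesis .
qed

definition residual_state :: "('a, 'q) aut \<Rightarrow> 'q set \<Rightarrow> 'a list \<Rightarrow> 'q \<Rightarrow> bool" where
  "residual_state A C u q \<longleftrightarrow> u \<in> lists (alph A) \<and> q \<in> C \<and>
     (\<forall>x. word A x \<longrightarrow> (u \<frown> x \<in> lang A \<longleftrightarrow> x \<in> state_lang A q))"

lemma residual_state_run_from:
  assumes "gfg_strategy A g" "uses_all_transitions A g" "C \<subseteq> states A"
    and "residual_state A C u q" "run_from A q x r" "range r \<subseteq> C" "word A x"
  shows "residual_state A C (u @ prefix k x) (r k)"
proof (induction k)
  case 0
  then show ?case using assms(4,5) by (simp add: run_from_def)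
next
  case (Suc k)
  have a: "x k \<in> alph A" using assms(7) by (simp add: word_def)
  have "(u @ prefix k x @ [x k]) \<frown> y \<in> lang A \<longleftrightarrow> y \<in> state_lang A (r (Suc k))"
    if "word A y" for y
  proof -
    have "(u @ prefix k x @ [x k]) \<frown> y \<in> lang A \<longleftrightarrow> (u @ prefix k x) \<frown> [x k] \<frown> y \<in> lang A"
      by (simp only: conc_conc append_assoc)
    also have "\<dots> \<longleftrightarrow> [x k] \<frown> y \<in> state_lang A (r k)"
      using Suc.IH word_conc[of "[x k]" A y] a that by (simp add: residual_state_def)
    also have "\<dots> \<longleftrightarrow> y \<in> state_lang A (r (Suc k))"
    proof (rule state_lang_step[OF assms(1,2) _ a _ that])
      show "r k \<in> states A" using assms(3,6) by blast
      show "r (Suc k) \<in> trans A (r k) (x k)" using assms(5) by (simp add: run_from_def)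
    qed
    finally show ?thesis .
  qed
  then show ?case using Suc.IH a assms(6) by (auto simp: residual_state_def)
qed

lemma run_from_into_scc:
  assumes "automaton A" "q \<in> scc A c" "run_from A q' x r" "range r \<subseteq> scc A c"
  shows "\<exists>v qs. v \<in> lists (alph A) \<and> length qs = length v \<and> set qs \<subseteq> scc A c \<and>
           run_from A q (v \<frown> x) (qs \<frown> r)"
proof -
  have q': "q' \<in> scc A c" using assms(3,4) by (auto simp: run_from_def)
  then have "(q, q') \<in> (edges A)\<^sup>*" using assms(2) by (auto simp: scc_def intro: rtrancl_trans)
  then show ?thesis
    using assms(2)
  proof (induction rule: converse_rtrancl_induct)
    case base
    then show ?case using assms(3) by (intro exI[of _ "[]"]) auto
  next
    case (step p p')
    obtain a where a: "a \<in> alph A" "p' \<in> trans A p a" using step.hyps(1) by (auto simp: edges_def)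
    have "p' \<in> states A" using assms(1) a step.hyps(1) by (auto simp: automaton_def edges_def)
    moreover have "(c, p') \<in> (edges A)\<^sup>*" using step.prems step.hyps(1) by (auto simp: scc_def)
    moreover have "(p', c) \<in> (edges A)\<^sup>*" using step.hyps(2) q' by (auto simp: scc_def intro: rtrancl_trans)
    ultimately have "p' \<in> scc A c" by (simp add: scc_def)
    then obtain v qs where v: "v \<in> lists (alph A)" "length qs = length v" "set qs \<subseteq> scc A c"
      "run_from A p' (v \<frown> x) (qs \<frown> r)" using step.IH by blast
    moreover have "(qs \<frown> r) 0 = p'" using v(4) by (simp add: run_from_def)
    ultimately have "run_from A p ((a # v) \<frown> x) ((p # qs) \<frown> r)"
      using a(2) by (simp only: build_cons run_from_build)
    then show ?case using v a(1) step.prems by (intro exI[of _ "a # v"] exI[of _ "p # qs"]) auto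
  qed
qed

lemma residual_state_continuation:
  assumes "automaton A" "gfg_strategy A g" "uses_all_transitions A g"
    and "residual_state A (scc A c) u q" "run_from A q' x r" "range r \<subseteq> scc A c" "word A x"
  shows "\<exists>z. word A z \<and> (u \<frown> z \<in> lang A \<longleftrightarrow> x \<in> state_lang A q') \<and>
           (\<forall>k. \<exists>p. residual_state A (scc A c) (u @ prefix k z) p)"
proof -
  have "q \<in> scc A c" using assms(4) by (simp add: residual_state_def)
  then obtain v qs where v: "v \<in> lists (alph A)" "length qs = length v" "set qs \<subseteq> scc A c"
    "run_from A q (v \<frown> x) (qs \<frown> r)"
    using run_from_into_scc[OF assms(1) _ assms(5,6)] by blast
  have z: "word A (v \<frown> x)" using word_conc v(1) assms(7) .
  have res: "residual_state A (scc A c) (u @ prefix k (v \<frown> x)) ((qs \<frown> r) k)" for k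
    using residual_state_run_from[OF assms(2,3) scc_subset_states assms(4) v(4) _ z] v(3) assms(6)
    by simp
  from res[of "length v"] have "residual_state A (scc A c) (u @ v) q'"
    using v(2) assms(5) by (simp add: run_from_def)
  then have "u \<frown> v \<frown> x \<in> lang A \<longleftrightarrow> x \<in> state_lang A q'"
    using assms(7) by (simp add: residual_state_def)
  then show ?thesis
    using z res by blast
qed

section \<open>Switching sets and weak GFG automata\<close>

definition switching :: "('a, 'q) aut \<Rightarrow> 'a list set \<Rightarrow> bool" where
  "switching A G \<longleftrightarrow> G \<subseteq> lists (alph A) \<and>
     (\<forall>u \<in> G. \<forall>b. \<exists>z. word A z \<and> (u \<frown> z \<in> lang A \<longleftrightarrow> b) \<and> (\<forall>k. u @ prefix k z \<in> G))"

lemma switching_cong: "alph B = alph A \<Longrightarrow> lang B = lang A \<Longrightarrow> switching B G \<longleftrightarrow> switching A G"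
  by (simp add: switching_def word_def)

lemma gfg_buchi_switching_step:
  assumes "automaton B" "acc B = Buchi \<alpha>" "gfg_strategy B h" "switching B G" "u \<in> G"
  shows "\<exists>v. v \<noteq> [] \<and> u @ v \<in> G \<and> (h (u @ v) \<in> \<alpha> \<longleftrightarrow> b)"
proof -
  obtain z where z: "word B z" "u \<frown> z \<in> lang B \<longleftrightarrow> b" "\<forall>k. u @ prefix k z \<in> G"
    using assms(4,5) unfolding switching_def by blast
  let ?w = "u \<frown> z" and ?r = "\<lambda>i. h (prefix i (u \<frown> z))"
  have "u \<in> lists (alph B)" using assms(4,5) by (auto simp: switching_def)
  then have w: "word B ?w" using word_conc z(1) by blast
  have run: "run B ?w ?r" using assms(3) w by (simp add: gfg_strategy_def pref_eq_prefix)
  have "\<exists>\<^sub>\<infinity>i. ?r i \<in> \<alpha> \<longleftrightarrow> b"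
  proof (cases b)
    case True
    then have "limit ?r \<inter> \<alpha> \<noteq> {}"
      using assms(2,3) w z(2) by (simp add: gfg_strategy_def pref_eq_prefix inf_set_eq_limit)
    then show ?thesis using True limit_inter_INF by simp
  next
    case False
    then have "limit ?r \<inter> \<alpha> = {}"
      using w run assms(2) z(2) by (auto simp: lang_def accepting_run_def inf_set_eq_limit)
    then have "\<forall>\<^sub>\<infinity>i. ?r i \<notin> \<alpha>"
      using limit_inter_empty run_finite_range[OF assms(1) w run] by blast
    then show ?thesis using False by (simp add: MOST_INFM)
  qed
  then obtain i where i: "length u < i" "?r i \<in> \<alpha> \<longleftrightarrow> b"
    unfolding INFM_nat by blast
  then have "prefix i ?w = u @ prefix (i - length u) z" by simp
  then show ?thesis using i z(3) by (intro exI[of _ "prefix (i - length u) z"]) auto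
qed

lemma prefix_chain_word:
  fixes f :: "nat \<Rightarrow> 'a list"
  assumes "\<And>n. \<exists>v. v \<noteq> [] \<and> f (Suc n) = f n @ v"
  shows "\<exists>W. \<forall>n. n \<le> length (f n) \<and> prefix (length (f n)) W = f n"
proof -
  have len: "n \<le> length (f n)" for n
  proof (induction n)
    case (Suc n)
    obtain v where "v \<noteq> []" "f (Suc n) = f n @ v" using assms[of n] by blast
    then show ?case using Suc by (cases v) auto
  qed simp
  have ext: "\<exists>v. f n = f m @ v" if "m \<le> n" for m n
    using that
  proof (induction n rule: dec_induct)
    case (step n)
    then show ?case using assms[of n] by (metis append.assoc)
  qed simp
  define W where "W i = f (Suc i) ! i" for i
  have "W i = f n ! i" if "i < length (f n)" for i n
  proof -
    obtain v v' where "f (max n (Suc i)) = f n @ v" "f (max n (Suc i)) = f (Suc i) @ v'"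
      using ext[of n "max n (Suc i)"] ext[of "Suc i" "max n (Suc i)"] by auto
    moreover have "i < length (f (Suc i))" using len[of "Suc i"] by simp
    ultimately show ?thesis using that by (metis W_def nth_append)
  qed
  then have "prefix (length (f n)) W = f n" for n by (intro nth_equalityI) auto
  then show ?thesis using len by blast
qed

lemma infinitely_alternating_word:
  assumes "u\<^sub>0 \<in> G" "\<And>u b. u \<in> G \<Longrightarrow> \<exists>v. v \<noteq> [] \<and> u @ v \<in> G \<and> (P (u @ v) \<longleftrightarrow> b)"
  shows "\<exists>W. (\<exists>\<^sub>\<infinity>i. P (prefix i W)) \<and> (\<exists>\<^sub>\<infinity>i. \<not> P (prefix i W)) \<and> range W \<subseteq> \<Union> (set ` G)"
proof -
  define F where "F u b = (SOME v. v \<noteq> [] \<and> u @ v \<in> G \<and> (P (u @ v) \<longleftrightarrow> b))" for u b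
  have F: "F u b \<noteq> [] \<and> u @ F u b \<in> G \<and> (P (u @ F u b) \<longleftrightarrow> b)" if "u \<in> G" for u b
    unfolding F_def by (rule someI_ex) (rule assms(2)[OF that])
  define f where "f = rec_nat u\<^sub>0 (\<lambda>n u. u @ F u (even n))"
  have f0: "f 0 = u\<^sub>0" and fS: "f (Suc n) = f n @ F (f n) (even n)" for n
    by (simp_all add: f_def)
  have G: "f n \<in> G" for n by (induction n) (simp_all add: f0 fS assms(1) F)
  have P: "P (f (Suc n)) \<longleftrightarrow> even n" for n using F[OF G[of n]] fS by simp
  obtain W where W: "\<And>n. n \<le> length (f n) \<and> prefix (length (f n)) W = f n"
    using prefix_chain_word[of f] F[OF G] fS by blast
  have "\<exists>\<^sub>\<infinity>i. P (prefix i W)" unfolding INFM_nat_le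
  proof
    fix m
    show "\<exists>i\<ge>m. P (prefix i W)"
      using W[of "Suc (2 * m)"] P[of "2 * m"] by (intro exI[of _ "length (f (Suc (2 * m)))"]) simp
  qed
  moreover have "\<exists>\<^sub>\<infinity>i. \<not> P (prefix i W)" unfolding INFM_nat_le
  proof
    fix m
    show "\<exists>i\<ge>m. \<not> P (prefix i W)"
      using W[of "Suc (Suc (2 * m))"] P[of "Suc (2 * m)"]
      by (intro exI[of _ "length (f (Suc (Suc (2 * m))))"]) simp
  qed
  moreover have "W i \<in> set (f (Suc i))" for i
    using W[of "Suc i"] by (metis Suc_le_lessD set_subsequence image_eqI atLeastLessThan_iff le0)
  then have "range W \<subseteq> \<Union> (set ` G)" using G by blast
  ultimately show ?thesis by blast
qed

lemma weak_gfg_switching_empty: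
  assumes "automaton B" "weak B" "GFG B" "switching B G"
  shows "G = {}"
proof (rule ccontr)
  assume "G \<noteq> {}"
  then obtain u\<^sub>0 where "u\<^sub>0 \<in> G" by blast
  obtain \<alpha> where \<alpha>: "acc B = Buchi \<alpha>" using assms(2) by (auto simp: weak_def)
  obtain h where h: "gfg_strategy B h" using assms(3) by (auto simp: GFG_def)
  obtain W where W: "\<exists>\<^sub>\<infinity>i. h (prefix i W) \<in> \<alpha>" "\<exists>\<^sub>\<infinity>i. h (prefix i W) \<in> - \<alpha>"
    "range W \<subseteq> \<Union> (set ` G)"
    using infinitely_alternating_word[of u\<^sub>0 G "\<lambda>u. h u \<in> \<alpha>"] \<open>u\<^sub>0 \<in> G\<close>
      gfg_buchi_switching_step[OF assms(1) \<alpha> h assms(4)] by auto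
  let ?r = "\<lambda>i. h (prefix i W)"
  have w: "word B W" using W(3) assms(4) by (auto simp: switching_def word_def)
  then have run: "run B W ?r" using h by (simp add: gfg_strategy_def pref_eq_prefix)
  have fin: "finite (range ?r)" using run_finite_range[OF assms(1) w run] .
  have "limit ?r \<inter> \<alpha> \<noteq> {}" "limit ?r \<inter> - \<alpha> \<noteq> {}"
    using INF_limit_inter[OF W(1)] INF_limit_inter[OF W(2)] fin by (auto simp: Int_commute)
  then show False using weak_run_limit[OF assms(1,2) \<alpha> w run] by blast
qed

lemma residual_states_switching:
  assumes "automaton A" "gfg_strategy A g" "uses_all_transitions A g"
    and "\<And>b. \<exists>x r. word A x \<and> run_from A (r 0) x r \<and> range r \<subseteq> scc A c \<and>
           (x \<in> state_lang A (r 0) \<longleftrightarrow> b)"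
  shows "switching A {u. \<exists>q. residual_state A (scc A c) u q}"
  unfolding switching_def
proof (intro conjI ballI allI)
  show "{u. \<exists>q. residual_state A (scc A c) u q} \<subseteq> lists (alph A)"
    by (auto simp: residual_state_def)
  fix u b assume "u \<in> {u. \<exists>q. residual_state A (scc A c) u q}"
  then obtain q where q: "residual_state A (scc A c) u q" by blast
  obtain x r where r: "word A x" "run_from A (r 0) x r" "range r \<subseteq> scc A c"
    and b: "x \<in> state_lang A (r 0) \<longleftrightarrow> b"
    using assms(4) by blast
  show "\<exists>z. word A z \<and> (u \<frown> z \<in> lang A \<longleftrightarrow> b) \<and>
      (\<forall>k. u @ prefix k z \<in> {u. \<exists>q. residual_state A (scc A c) u q})"
    using residual_state_continuation[OF assms(1-3) q r(2,3,1)] b by auto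
qed

section \<open>The weak acceptance condition\<close>

definition accepting_scc_states :: "('a, 'q) aut \<Rightarrow> 'q set" where
  "accepting_scc_states A = {q \<in> states A. \<exists>x r. word A x \<and> run_from A (r 0) x r \<and>
     range r \<subseteq> scc A q \<and> accepts (acc A) (limit r)}"

lemma accepting_scc_states_scc_closed:
  "q \<in> accepting_scc_states A \<Longrightarrow> q' \<in> scc A q \<Longrightarrow> q' \<in> accepting_scc_states A"
  using scc_eq[of q' A q] scc_subset_states[of A q] by (auto simp: accepting_scc_states_def)

lemma accepting_run_limit_meets_accepting_scc_states:
  assumes "automaton A" "word A w" "run A w r" "accepts (acc A) (limit r)"
  shows "limit r \<inter> accepting_scc_states A \<noteq> {}"
proof -
  obtain n where n: "limit r = range (suffix n r)"
    using limit_is_suffix[OF run_finite_range[OF assms(1-3)]] by blast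
  then have lim: "r n \<in> limit r" by (metis rangeI suffix_nth add_0_right)
  have "run_from A (r n) (suffix n w) (suffix n r)"
    using run_from_suffix[of A "r 0" w r n] assms(3) by (simp add: run_iff_run_from)
  moreover have "range (suffix n r) \<subseteq> scc A (r n)"
    using limit_run_subset_scc[OF assms(1-3) lim] n by simp
  moreover have "r n \<in> states A" using run_states[OF assms(1-3)] .
  ultimately have "r n \<in> accepting_scc_states A"
    using word_suffix[OF assms(2)] assms(4) n unfolding accepting_scc_states_def
    by (intro CollectI conjI exI[of _ "suffix n w"] exI[of _ "suffix n r"]) (auto simp: run_from_def)
  then show ?thesis using lim by blast
qed

lemma lang_if_limit_meets_accepting_scc_states:
  assumes "automaton A" "gfg_strategy A g" "uses_all_transitions A g"
    and "automaton B" "alph B = alph A" "weak B" "GFG B" "lang B = lang A"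
    and "word A w" "run A w r" "limit r \<inter> accepting_scc_states A \<noteq> {}"
  shows "w \<in> lang A"
proof (rule ccontr)
  assume "w \<notin> lang A"
  obtain q where q: "q \<in> limit r" "q \<in> accepting_scc_states A" using assms(11) by blast
  obtain n where n: "limit r = range (suffix n r)"
    using limit_is_suffix[OF run_finite_range[OF assms(1,9,10)]] by blast
  have rq: "range (suffix n r) \<subseteq> scc A q" using limit_run_subset_scc[OF assms(1,9,10) q(1)] n by simp
  \<comment> \<open>The SCC of q carries an accepting path, and the tail of the rejecting run r.\<close>
  have "\<exists>x r'. word A x \<and> run_from A (r' 0) x r' \<and> range r' \<subseteq> scc A q \<and>
      (x \<in> state_lang A (r' 0) \<longleftrightarrow> b)" for b
  proof (cases b)
    case True
    then show ?thesis using q(2) by (auto simp: accepting_scc_states_def state_lang_def)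
  next
    case False
    have "suffix n w \<notin> state_lang A (r n)"
      using lang_if_suffix_in_state_lang[OF assms(9,10)] \<open>w \<notin> lang A\<close> by blast
    moreover have "run_from A (r n) (suffix n w) (suffix n r)"
      using run_from_suffix[of A "r 0" w r n] assms(10) by (simp add: run_iff_run_from)
    ultimately show ?thesis
      using False rq word_suffix[OF assms(9)]
      by (intro exI[of _ "suffix n w"] exI[of _ "suffix n r"]) (simp add: run_from_def)
  qed
  then have switching: "switching B {u. \<exists>p. residual_state A (scc A q) u p}"
    using residual_states_switching[OF assms(1-3)] switching_cong[OF assms(5,8)] by blast
  have "r n \<in> states A" "w n \<in> alph A" "r (Suc n) \<in> trans A (r n) (w n)"
    using run_states[OF assms(1,9,10)] assms(9,10) by (auto simp: word_def run_def)
  then obtain u where u: "u \<in> lists (alph A)" "r n = g u"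
    using assms(3) unfolding uses_all_transitions_def by blast
  have "r n \<in> scc A q" using rq[THEN subsetD, OF rangeI[of _ 0]] by simp
  then have "residual_state A (scc A q) u (r n)"
    using gfg_conc_in_lang_iff[OF assms(2) u(1)] u by (simp add: residual_state_def)
  then show False using weak_gfg_switching_empty[OF assms(4,6,7) switching] by blast
qed

lemma weak_buchi_update:
  assumes "\<alpha> \<subseteq> states A" "\<And>q q'. q \<in> \<alpha> \<Longrightarrow> q' \<in> scc A q \<Longrightarrow> q' \<in> \<alpha>"
  shows "weak (A\<lparr>acc := Buchi \<alpha>\<rparr>)"
  unfolding weak_def
proof (intro exI[of _ \<alpha>] conjI ballI)
  fix q assume "q \<in> states (A\<lparr>acc := Buchi \<alpha>\<rparr>)"
  show "scc (A\<lparr>acc := Buchi \<alpha>\<rparr>) q \<subseteq> \<alpha> \<or> scc (A\<lparr>acc := Buchi \<alpha>\<rparr>) q \<inter> \<alpha> = {}"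
  proof (cases "scc A q \<inter> \<alpha> = {}")
    case False
    then obtain q' where "q' \<in> scc A q" "q' \<in> \<alpha>" by blast
    then show ?thesis using assms(2)[of q'] scc_eq[of q' A q] by auto
  qed simp
qed (use assms(1) in simp_all)

lemma gfg_buchi_update:
  assumes "gfg_strategy A g"
    and "\<And>w. word A w \<Longrightarrow> w \<in> lang A \<Longrightarrow> limit (\<lambda>i. g (prefix i w)) \<inter> \<alpha> \<noteq> {}"
    and "\<And>w r. word A w \<Longrightarrow> run A w r \<Longrightarrow> limit r \<inter> \<alpha> \<noteq> {} \<Longrightarrow> w \<in> lang A"
  shows "lang (A\<lparr>acc := Buchi \<alpha>\<rparr>) = lang A" "gfg_strategy (A\<lparr>acc := Buchi \<alpha>\<rparr>) g"
proof -
  have run: "run A w (\<lambda>i. g (prefix i w))" if "word A w" for w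
    using assms(1) that by (simp add: gfg_strategy_def pref_eq_prefix)
  show lang: "lang (A\<lparr>acc := Buchi \<alpha>\<rparr>) = lang A"
  proof
    show "lang (A\<lparr>acc := Buchi \<alpha>\<rparr>) \<subseteq> lang A"
      using assms(3) by (auto simp: lang_def accepting_run_def inf_set_eq_limit)
    show "lang A \<subseteq> lang (A\<lparr>acc := Buchi \<alpha>\<rparr>)"
    proof
      fix w assume w: "w \<in> lang A"
      then have "word A w" by (simp add: lang_def)
      then show "w \<in> lang (A\<lparr>acc := Buchi \<alpha>\<rparr>)"
        using assms(2)[OF _ w] run by (auto simp: lang_def accepting_run_def inf_set_eq_limit)
    qed
  qed
  show "gfg_strategy (A\<lparr>acc := Buchi \<alpha>\<rparr>) g"
    using assms(2) run lang by (simp add: gfg_strategy_def pref_eq_prefix inf_set_eq_limit)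
qed

theorem corollary19:
  fixes A :: "('a, 'q) aut" and B :: "('a, 'p) aut"
  assumes "automaton A"
    and "(\<exists>P. acc A = Streett P) \<or> (\<exists>P. acc A = Rabin P)"
    and "GFG A"
    and "tight A"
    and "automaton B" and "alph B = alph A" and "weak B" and "GFG B"
    and "lang B = lang A"
  shows "\<exists>\<alpha>' \<subseteq> states A. weak (A\<lparr>acc := Buchi \<alpha>'\<rparr>) \<and> GFG (A\<lparr>acc := Buchi \<alpha>'\<rparr>) \<and>
           lang (A\<lparr>acc := Buchi \<alpha>'\<rparr>) = lang A"
proof -
  obtain T where gfg: "gfg_strategy A (strat T)" and all: "uses_all_transitions A (strat T)"
    using \<open>tight A\<close> by (rule tight_strategy)
  let ?\<alpha> = "accepting_scc_states A"
  have "?\<alpha> \<subseteq> states A" by (auto simp: accepting_scc_states_def)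
  moreover have "weak (A\<lparr>acc := Buchi ?\<alpha>\<rparr>)"
    using calculation accepting_scc_states_scc_closed by (rule weak_buchi_update)
  moreover have "limit (\<lambda>i. strat T (prefix i w)) \<inter> ?\<alpha> \<noteq> {}" if "word A w" "w \<in> lang A" for w
    using accepting_run_limit_meets_accepting_scc_states[OF assms(1) that(1)] gfg that
    by (simp add: gfg_strategy_def pref_eq_prefix inf_set_eq_limit)
  moreover have "w \<in> lang A" if "word A w" "run A w r" "limit r \<inter> ?\<alpha> \<noteq> {}" for w r
    using lang_if_limit_meets_accepting_scc_states[OF assms(1) gfg all assms(5-9) that] .
  ultimately show ?thesis using gfg_buchi_update[OF gfg] by (metis GFG_def)
qed

end
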